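(* Let $\mu$ be a positive finite Borel measure supported in $[0,1]$. Let $\mathcal{D}\subset\ell^2(\mathbb{Z})$ be the subspace of finitely supported sequences, and define $F:\mathcal{D}\to L^2(\mu)$ by $F((c_k)_{k\in\mathbb{Z}})(x)=\sum_k c_k e_k(x)$, where $e_k(x)=e^{i2\pi kx}$. If $$\sum_{k\in\mathbb{Z}}\Big|\int e_k(x)\,d\mu(x)\Big|^2<\infty,$$ then the operator $F$ (as a densely defined operator from $\ell^2(\mathbb{Z})$ into $L^2(\mu)$) is closable.
   Context: An operator is closable if the closure of its graph is the graph of a linear operator. *)

theory Defs
  imports "HOL-Analysis.Analysis"
begin

definition ek :: "int \<Rightarrow> real \<Rightarrow> complex" where
  "ek k x = exp (\<i> * complex_of_real (2 * pi * real_of_int k * x))"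

definition l2Z :: "(int \<Rightarrow> complex) set" where
  "l2Z = {c. (\<lambda>k. (cmod (c k))^2) summable_on UNIV}"

definition l2Z_dist :: "(int \<Rightarrow> complex) \<Rightarrow> (int \<Rightarrow> complex) \<Rightarrow> real" where
  "l2Z_dist c d = sqrt (\<Sum>\<^sub>\<infinity>k\<in>UNIV. (cmod (c k - d k))^2)"

definition finsupp_seqs :: "(int \<Rightarrow> complex) set" where
  "finsupp_seqs = {c. finite {k. c k \<noteq> 0}}"

text \<open>L^2(mu) (complex valued), represented by functions, with its (pseudo)distance.\<close>
definition L2 :: "real measure \<Rightarrow> (real \<Rightarrow> complex) set" where
  "L2 M = {f. f \<in> borel_measurable M \<and> integrable M (\<lambda>x. (cmod (f x))^2)}"

definition L2_dist :: "real measure \<Rightarrow> (real \<Rightarrow> complex) \<Rightarrow> (real \<Rightarrow> complex) \<Rightarrow> real" where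
  "L2_dist M f g = sqrt (LINT x|M. (cmod (f x - g x))^2)"

definition Fop :: "(int \<Rightarrow> complex) \<Rightarrow> real \<Rightarrow> complex" where
  "Fop c x = (\<Sum>k\<in>{k. c k \<noteq> 0}. c k * ek k x)"

definition graph_closure :: "real measure \<Rightarrow> ((int \<Rightarrow> complex) \<times> (real \<Rightarrow> complex)) set" where
  "graph_closure M = {(c, g). c \<in> l2Z \<and> g \<in> L2 M \<and>
     (\<exists>s. (\<forall>n. s n \<in> finsupp_seqs) \<and>
          (\<lambda>n. l2Z_dist (s n) c) \<longlonglongrightarrow> 0 \<and>
          (\<lambda>n. L2_dist M (Fop (s n)) g) \<longlonglongrightarrow> 0)}"

text \<open>F is closable: the closure of its graph is the graph of a linear operator
  T with (linear) domain Dom, with values in L^2(mu) taken modulo mu-a.e. equality.\<close>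
definition closable_F :: "real measure \<Rightarrow> bool" where
  "closable_F M \<longleftrightarrow> (\<exists>Dom T.
     (\<forall>c\<in>Dom. \<forall>d\<in>Dom. (\<lambda>k. c k + d k) \<in> Dom) \<and>
     (\<forall>c\<in>Dom. \<forall>a. (\<lambda>k. a * c k) \<in> Dom) \<and>
     (\<forall>c\<in>Dom. T c \<in> L2 M) \<and>
     (\<forall>c\<in>Dom. \<forall>d\<in>Dom. AE x in M. T (\<lambda>k. c k + d k) x = T c x + T d x) \<and>
     (\<forall>c\<in>Dom. \<forall>a. AE x in M. T (\<lambda>k. a * c k) x = a * T c x) \<and>
     graph_closure M = {(c, g). c \<in> Dom \<and> g \<in> L2 M \<and> (AE x in M. g x = T c x)})"

end

theory Submission
  imports Defs
begin

(*
  Write m(k) for the Fourier coefficient of mu at k, i.e. the integral of e_k. For finitely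
  supported c and d, expanding the product gives
    <F c, F d> = sum_j cnj (d_j) * sum_k c_k * m(k - j),
  and Cauchy-Schwarz in k together with sum_k |m(k)|^2 < oo yields
    |<F c, F d>| <= |c|_2 * |d|_1 * (sum_k |m(k)|^2)^(1/2).
  So if c_n -> 0 in l^2(Z) and F c_n -> g in L^2(mu), then <g, F d> = lim_n <F c_n, F d> = 0 for
  every finitely supported d, hence <g, g> = lim_m <g, F c_m> = 0 and g = 0 almost everywhere.
  The closure of the graph is a linear subspace, and we have just seen that its fibre over 0 is
  trivial; so it is the graph of a linear operator.
*)

section \<open>Square-integrable complex functions\<close>

definition L2_space :: "'a measure \<Rightarrow> ('a \<Rightarrow> complex) set" where
  "L2_space N = {f. f \<in> borel_measurable N \<and> integrable N (\<lambda>x. (cmod (f x))^2)}"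

definition L2_norm :: "'a measure \<Rightarrow> ('a \<Rightarrow> complex) \<Rightarrow> real" where
  "L2_norm N f = sqrt (LINT x|N. (cmod (f x))^2)"

definition L2_inner :: "'a measure \<Rightarrow> ('a \<Rightarrow> complex) \<Rightarrow> ('a \<Rightarrow> complex) \<Rightarrow> complex" where
  "L2_inner N f g = (LINT x|N. f x * cnj (g x))"

lemma L2_norm_nonneg: "0 \<le> L2_norm N f"
  unfolding L2_norm_def by (simp add: integral_nonneg_AE)

lemma L2_norm_mult: "L2_norm N (\<lambda>x. a * f x) = cmod a * L2_norm N f"
  by (simp add: L2_norm_def norm_mult power_mult_distrib real_sqrt_mult)

lemma L2_space_mult: "f \<in> L2_space N \<Longrightarrow> (\<lambda>x. a * f x) \<in> L2_space N"
  by (auto simp: L2_space_def norm_mult power_mult_distrib)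

lemma L2_space_add:
  assumes "f \<in> L2_space N" "g \<in> L2_space N"
  shows "(\<lambda>x. f x + g x) \<in> L2_space N"
proof -
  have "integrable N (\<lambda>x. (cmod (f x + g x))^2)"
  proof (rule Bochner_Integration.integrable_bound)
    show "integrable N (\<lambda>x. 2 * (cmod (f x))^2 + 2 * (cmod (g x))^2)"
      using assms by (auto simp: L2_space_def)
    show "(\<lambda>x. (cmod (f x + g x))^2) \<in> borel_measurable N"
      using assms by (auto simp: L2_space_def)
    have "(cmod (f x + g x))^2 \<le> 2 * (cmod (f x))^2 + 2 * (cmod (g x))^2" for x
    proof -
      have "(cmod (f x + g x))^2 \<le> (cmod (f x) + cmod (g x))^2"
        by (simp add: norm_triangle_ineq power_mono)
      also have "\<dots> \<le> 2 * (cmod (f x))^2 + 2 * (cmod (g x))^2"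
        using sum_squares_bound[of "cmod (f x)" "cmod (g x)"] by (simp add: power2_sum)
      finally show ?thesis .
    qed
    then show "AE x in N. norm ((cmod (f x + g x))^2) \<le> norm (2 * (cmod (f x))^2 + 2 * (cmod (g x))^2)"
      by simp
  qed
  with assms show ?thesis by (auto simp: L2_space_def)
qed

lemma L2_space_diff: "f \<in> L2_space N \<Longrightarrow> g \<in> L2_space N \<Longrightarrow> (\<lambda>x. f x - g x) \<in> L2_space N"
  using L2_space_add[of f N "\<lambda>x. -1 * g x"] L2_space_mult[of g N "-1"] by simp

lemma integrable_norm_mult_L2:
  assumes "f \<in> L2_space N" "g \<in> L2_space N"
  shows "integrable N (\<lambda>x. cmod (f x) * cmod (g x))"
proof (rule Bochner_Integration.integrable_bound)
  show "integrable N (\<lambda>x. (cmod (f x))^2 + (cmod (g x))^2)"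
    using assms by (auto simp: L2_space_def)
  show "(\<lambda>x. cmod (f x) * cmod (g x)) \<in> borel_measurable N"
    using assms by (auto simp: L2_space_def)
  have "cmod (f x) * cmod (g x) \<le> (cmod (f x))^2 + (cmod (g x))^2" for x
    using sum_squares_bound[of "cmod (f x)" "cmod (g x)"]
      mult_nonneg_nonneg[OF norm_ge_zero norm_ge_zero, of "f x" "g x"] by linarith
  then show "AE x in N. norm (cmod (f x) * cmod (g x)) \<le> norm ((cmod (f x))^2 + (cmod (g x))^2)"
    by simp
qed

lemma integrable_mult_cnj_L2:
  assumes "f \<in> L2_space N" "g \<in> L2_space N"
  shows "integrable N (\<lambda>x. f x * cnj (g x))"
proof -
  have [measurable]: "f \<in> borel_measurable N" "g \<in> borel_measurable N"
    using assms by (auto simp: L2_space_def)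
  have [measurable]: "(\<lambda>x. cnj (g x)) \<in> borel_measurable N"
    by (rule borel_measurable_continuous_on[where f=cnj]) (auto intro: continuous_intros)
  have "integrable N (\<lambda>x. norm (f x * cnj (g x)))"
    using integrable_norm_mult_L2[OF assms] by (simp add: norm_mult)
  then show ?thesis
    by (subst integrable_norm_iff[symmetric]) measurable
qed

lemma L2_Cauchy_Schwarz:
  assumes "f \<in> L2_space N" "g \<in> L2_space N"
  shows "(LINT x|N. cmod (f x) * cmod (g x)) \<le> L2_norm N f * L2_norm N g"
proof -
  define u A B where "u = (LINT x|N. cmod (f x) * cmod (g x))"
    and "A = (LINT x|N. (cmod (f x))^2)" and "B = (LINT x|N. (cmod (g x))^2)"
  have [measurable]: "f \<in> borel_measurable N" "g \<in> borel_measurable N"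
    using assms by (auto simp: L2_space_def)
  have nonneg: "0 \<le> u" "0 \<le> A" "0 \<le> B"
    unfolding u_def A_def B_def by (simp_all add: integral_nonneg_AE)
  have "(\<integral>\<^sup>+x. ennreal (cmod (f x)) * ennreal (cmod (g x)) \<partial>N) = ennreal u"
    unfolding u_def
    by (subst nn_integral_eq_integral[symmetric])
       (auto simp: integrable_norm_mult_L2[OF assms] ennreal_mult)
  moreover have "(\<integral>\<^sup>+x. ennreal (cmod (f x)) ^ 2 \<partial>N) = ennreal A"
    "(\<integral>\<^sup>+x. ennreal (cmod (g x)) ^ 2 \<partial>N) = ennreal B"
    unfolding A_def B_def using assms
    by (subst nn_integral_eq_integral[symmetric]; auto simp: L2_space_def ennreal_power)+
  ultimately have "ennreal (u^2) \<le> ennreal (A * B)"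
    using Cauchy_Schwarz_nn_integral[of "\<lambda>x. cmod (f x)" N "\<lambda>x. cmod (g x)"] nonneg
    by (simp add: ennreal_power ennreal_mult)
  then have "u \<le> sqrt (A * B)"
    using nonneg by (simp add: ennreal_le_iff real_le_rsqrt)
  then show ?thesis unfolding u_def L2_norm_def A_def B_def by (simp add: real_sqrt_mult)
qed

lemma norm_L2_inner_le:
  assumes "f \<in> L2_space N" "g \<in> L2_space N"
  shows "cmod (L2_inner N f g) \<le> L2_norm N f * L2_norm N g"
proof -
  have "cmod (L2_inner N f g) \<le> (LINT x|N. cmod (f x * cnj (g x)))"
    unfolding L2_inner_def by (rule integral_norm_bound)
  also have "\<dots> \<le> L2_norm N f * L2_norm N g"
    using L2_Cauchy_Schwarz[OF assms] by (simp add: norm_mult)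
  finally show ?thesis .
qed

lemma L2_norm_triangle:
  assumes "f \<in> L2_space N" "g \<in> L2_space N"
  shows "L2_norm N (\<lambda>x. f x + g x) \<le> L2_norm N f + L2_norm N g"
proof -
  have int: "integrable N (\<lambda>x. (cmod (f x))^2)" "integrable N (\<lambda>x. (cmod (g x))^2)"
    "integrable N (\<lambda>x. cmod (f x) * cmod (g x))" "integrable N (\<lambda>x. (cmod (f x + g x))^2)"
    using assms L2_space_add[OF assms] integrable_norm_mult_L2[OF assms]
    by (auto simp: L2_space_def)
  have "(cmod (f x + g x))^2 \<le> (cmod (f x))^2 + 2 * (cmod (f x) * cmod (g x)) + (cmod (g x))^2"
    for x
    using power_mono[OF norm_triangle_ineq[of "f x" "g x"], of 2] by (simp add: power2_sum)
  then have "(LINT x|N. (cmod (f x + g x))^2) \<le>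
        (LINT x|N. (cmod (f x))^2 + 2 * (cmod (f x) * cmod (g x)) + (cmod (g x))^2)"
    using int by (intro integral_mono) auto
  also have "\<dots> = (LINT x|N. (cmod (f x))^2) + 2 * (LINT x|N. cmod (f x) * cmod (g x))
      + (LINT x|N. (cmod (g x))^2)"
    using int by simp
  also have "\<dots> \<le> (L2_norm N f + L2_norm N g)^2"
    using L2_Cauchy_Schwarz[OF assms] by (simp add: L2_norm_def power2_sum integral_nonneg_AE)
  finally have "(L2_norm N (\<lambda>x. f x + g x))^2 \<le> (L2_norm N f + L2_norm N g)^2"
    by (simp add: L2_norm_def integral_nonneg_AE)
  then show ?thesis
    using L2_norm_nonneg by (meson power2_le_imp_le add_nonneg_nonneg)
qed

lemma L2_norm_diff_add_le:
  assumes "f \<in> L2_space N" "g \<in> L2_space N" "f' \<in> L2_space N" "g' \<in> L2_space N"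
  shows "L2_norm N (\<lambda>x. (f x + g x) - (f' x + g' x))
    \<le> L2_norm N (\<lambda>x. f x - f' x) + L2_norm N (\<lambda>x. g x - g' x)"
  using L2_norm_triangle[OF L2_space_diff[OF assms(1,3)] L2_space_diff[OF assms(2,4)]]
  by (simp add: algebra_simps)

lemma L2_inner_cnj: "L2_inner N g f = cnj (L2_inner N f g)"
proof -
  have "g x * cnj (f x) = cnj (f x * cnj (g x))" for x
    by (simp add: mult.commute)
  then show ?thesis
    unfolding L2_inner_def by (simp only: Bochner_Integration.integral_cnj)
qed

lemma L2_inner_diff_left:
  assumes "f \<in> L2_space N" "g \<in> L2_space N" "h \<in> L2_space N"
  shows "L2_inner N (\<lambda>x. f x - g x) h = L2_inner N f h - L2_inner N g h"
  unfolding L2_inner_def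
  by (simp add: left_diff_distrib integrable_mult_cnj_L2 assms)

lemma L2_inner_tendsto_left:
  assumes "f \<in> L2_space N" "h \<in> L2_space N" "\<And>n. P n \<in> L2_space N"
    and "(\<lambda>n. L2_norm N (\<lambda>x. P n x - f x)) \<longlonglongrightarrow> 0"
  shows "(\<lambda>n. L2_inner N (P n) h) \<longlonglongrightarrow> L2_inner N f h"
proof (rule LIM_zero_cancel, rule Lim_null_comparison)
  show "\<forall>\<^sub>F n in sequentially. cmod (L2_inner N (P n) h - L2_inner N f h)
      \<le> L2_norm N (\<lambda>x. P n x - f x) * L2_norm N h"
    using norm_L2_inner_le[OF L2_space_diff[OF assms(3) assms(1)] assms(2)]
    by (simp add: L2_inner_diff_left assms)
  show "(\<lambda>n. L2_norm N (\<lambda>x. P n x - f x) * L2_norm N h) \<longlonglongrightarrow> 0"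
    using tendsto_mult_left_zero[OF assms(4)] .
qed

lemma AE_zero_if_L2_inner_self_zero:
  assumes "f \<in> L2_space N" "L2_inner N f f = 0"
  shows "AE x in N. f x = 0"
proof -
  have "f x * cnj (f x) = complex_of_real ((cmod (f x))^2)" for x
    using complex_norm_square[of "f x"] by simp
  then have "L2_inner N f f = complex_of_real (LINT x|N. (cmod (f x))^2)"
    unfolding L2_inner_def by (simp flip: integral_complex_of_real)
  with assms have "(LINT x|N. (cmod (f x))^2) = 0" by simp
  then have "AE x in N. (cmod (f x))^2 = 0"
    using assms(1) by (subst integral_nonneg_eq_0_iff_AE[symmetric]) (auto simp: L2_space_def)
  then show ?thesis by simp
qed

lemma L2_limit_AE_zero_if_asymptotically_orthogonal:
  assumes "g \<in> L2_space N" "\<And>n. P n \<in> L2_space N"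
    and "(\<lambda>n. L2_norm N (\<lambda>x. P n x - g x)) \<longlonglongrightarrow> 0"
    and "\<And>m. (\<lambda>n. L2_inner N (P n) (P m)) \<longlonglongrightarrow> 0"
  shows "AE x in N. g x = 0"
proof (rule AE_zero_if_L2_inner_self_zero[OF assms(1)])
  have "L2_inner N g (P m) = 0" for m
    using LIMSEQ_unique[OF L2_inner_tendsto_left[OF assms(1,2,2,3)] assms(4)] .
  then have "(\<lambda>m. L2_inner N (P m) g) \<longlonglongrightarrow> 0"
    by (subst L2_inner_cnj) simp
  then show "L2_inner N g g = 0"
    using LIMSEQ_unique[OF L2_inner_tendsto_left[OF assms(1,1,2,3)]] by blast
qed

lemma summable_on_iff_integrable_count_space:
  fixes h :: "'b \<Rightarrow> real"
  shows "h summable_on UNIV \<longleftrightarrow> integrable (count_space UNIV) h"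
  using summable_on_iff_abs_summable_on_real[of h UNIV] abs_summable_equivalent[of h UNIV]
  by (simp add: Infinite_Set_Sum.abs_summable_on_def)

lemma infsum_eq_integral_count_space:
  fixes h :: "'b \<Rightarrow> real"
  shows "infsum h UNIV = integral\<^sup>L (count_space UNIV) h"
proof (cases "h summable_on UNIV")
  case True
  then have "Infinite_Set_Sum.abs_summable_on h UNIV"
    using summable_on_iff_abs_summable_on_real abs_summable_equivalent by blast
  from infsetsum_infsum[OF this] show ?thesis by (simp add: infsetsum_def)
next
  case False
  then show ?thesis
    by (simp add: summable_on_iff_integrable_count_space infsum_not_exists
        not_integrable_integral_eq)
qed

lemma l2Z_eq_L2_space: "l2Z = L2_space (count_space UNIV)"
  by (auto simp: l2Z_def L2_space_def summable_on_iff_integrable_count_space)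

lemma l2Z_dist_eq_L2_norm: "l2Z_dist c d = L2_norm (count_space UNIV) (\<lambda>k. c k - d k)"
  by (simp add: l2Z_dist_def L2_norm_def infsum_eq_integral_count_space)

lemma L2_eq_L2_space: "L2 M = L2_space M"
  by (simp add: L2_def L2_space_def)

lemma L2_dist_eq_L2_norm: "L2_dist M f g = L2_norm M (\<lambda>x. f x - g x)"
  by (simp add: L2_dist_def L2_norm_def)

lemma l2Z_dist_nonneg: "0 \<le> l2Z_dist c d"
  by (simp add: l2Z_dist_eq_L2_norm L2_norm_nonneg)

lemma L2_dist_nonneg: "0 \<le> L2_dist M f g"
  by (simp add: L2_dist_eq_L2_norm L2_norm_nonneg)

lemma l2Z_dist_mult: "l2Z_dist (\<lambda>k. a * c k) (\<lambda>k. a * d k) = cmod a * l2Z_dist c d"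
  using L2_norm_mult[of _ a "\<lambda>k. c k - d k"]
  by (simp add: l2Z_dist_eq_L2_norm right_diff_distrib)

lemma L2_dist_mult: "L2_dist M (\<lambda>x. a * f x) (\<lambda>x. a * g x) = cmod a * L2_dist M f g"
  using L2_norm_mult[of _ a "\<lambda>x. f x - g x"]
  by (simp add: L2_dist_eq_L2_norm right_diff_distrib)

lemma finsupp_seqs_subset_l2Z: "finsupp_seqs \<subseteq> l2Z"
proof
  fix c assume "c \<in> finsupp_seqs"
  then have "(\<lambda>k. (cmod (c k))^2) summable_on {k. c k \<noteq> 0}"
    by (simp add: finsupp_seqs_def)
  moreover have "(\<lambda>k. (cmod (c k))^2) summable_on {k. c k \<noteq> 0} \<longleftrightarrow>
      (\<lambda>k. (cmod (c k))^2) summable_on UNIV"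
    by (rule summable_on_cong_neutral) auto
  ultimately show "c \<in> l2Z"
    by (simp add: l2Z_def)
qed

lemma finsupp_seqs_add:
  assumes "c \<in> finsupp_seqs" "d \<in> finsupp_seqs"
  shows "(\<lambda>k. c k + d k) \<in> finsupp_seqs"
proof -
  have "{k. c k + d k \<noteq> 0} \<subseteq> {k. c k \<noteq> 0} \<union> {k. d k \<noteq> 0}" by auto
  with assms show ?thesis by (auto simp: finsupp_seqs_def intro: finite_subset)
qed

lemma finsupp_seqs_mult: "c \<in> finsupp_seqs \<Longrightarrow> (\<lambda>k. a * c k) \<in> finsupp_seqs"
  by (auto simp: finsupp_seqs_def intro: finite_subset[of _ "{k. c k \<noteq> 0}"])

lemma l2Z_dist_zero_finsupp:
  assumes "c \<in> finsupp_seqs"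
  shows "l2Z_dist c (\<lambda>k. 0) = L2_set (\<lambda>k. cmod (c k)) {k. c k \<noteq> 0}"
proof -
  have "infsum (\<lambda>k. (cmod (c k))^2) UNIV = infsum (\<lambda>k. (cmod (c k))^2) {k. c k \<noteq> 0}"
    by (rule infsum_cong_neutral) auto
  with assms show ?thesis by (simp add: l2Z_dist_def L2_set_def finsupp_seqs_def)
qed

lemma Fop_eq_sum:
  assumes "finite S" "{k. c k \<noteq> 0} \<subseteq> S"
  shows "Fop c x = (\<Sum>k\<in>S. c k * ek k x)"
  unfolding Fop_def by (rule sum.mono_neutral_left) (use assms in auto)

lemma Fop_add:
  assumes "c \<in> finsupp_seqs" "d \<in> finsupp_seqs"
  shows "Fop (\<lambda>k. c k + d k) = (\<lambda>x. Fop c x + Fop d x)"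
proof
  fix x
  let ?S = "{k. c k \<noteq> 0} \<union> {k. d k \<noteq> 0}"
  have fin: "finite ?S" using assms by (simp add: finsupp_seqs_def)
  have "Fop (\<lambda>k. c k + d k) x = (\<Sum>k\<in>?S. (c k + d k) * ek k x)"
    by (rule Fop_eq_sum[OF fin]) auto
  also have "\<dots> = (\<Sum>k\<in>?S. c k * ek k x) + (\<Sum>k\<in>?S. d k * ek k x)"
    by (simp add: distrib_right sum.distrib)
  also have "\<dots> = Fop c x + Fop d x"
    using Fop_eq_sum[OF fin, of c x] Fop_eq_sum[OF fin, of d x] by auto
  finally show "Fop (\<lambda>k. c k + d k) x = Fop c x + Fop d x" .
qed

lemma Fop_mult: "Fop (\<lambda>k. a * c k) = (\<lambda>x. a * Fop c x)"
  by (cases "a = 0") (simp_all add: fun_eq_iff Fop_def sum_distrib_left mult.assoc)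

lemma norm_ek [simp]: "cmod (ek k x) = 1"
  by (simp add: ek_def norm_exp_i_times)

lemma continuous_on_ek: "continuous_on UNIV (ek k)"
  unfolding ek_def by (intro continuous_intros)

lemma ek_mult_cnj: "ek k x * cnj (ek j x) = ek (k - j) x"
  by (simp add: ek_def exp_cnj mult_exp_exp algebra_simps flip: exp_minus)

section \<open>The closure of the graph\<close>

lemma graph_closureI:
  assumes "c \<in> l2Z" "g \<in> L2 M" "\<And>n. s n \<in> finsupp_seqs"
    "(\<lambda>n. l2Z_dist (s n) c) \<longlonglongrightarrow> 0" "(\<lambda>n. L2_dist M (Fop (s n)) g) \<longlonglongrightarrow> 0"
  shows "(c, g) \<in> graph_closure M"
  using assms unfolding graph_closure_def by blast

lemma graph_closure_in_L2: "(c, g) \<in> graph_closure M \<Longrightarrow> g \<in> L2 M"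
  by (simp add: graph_closure_def)

lemma graph_closureE:
  assumes "(c, g) \<in> graph_closure M"
  obtains s where "\<And>n. s n \<in> finsupp_seqs" "(\<lambda>n. l2Z_dist (s n) c) \<longlonglongrightarrow> 0"
    "(\<lambda>n. L2_dist M (Fop (s n)) g) \<longlonglongrightarrow> 0" "c \<in> l2Z" "g \<in> L2 M"
  using assms unfolding graph_closure_def by blast

locale borel_finite_measure = finite_measure M for M :: "real measure" +
  assumes sets_M: "sets M = sets borel"
begin

lemma measurable_ek [measurable]: "ek k \<in> borel_measurable M"
  using borel_measurable_continuous_onI[OF continuous_on_ek] measurable_cong_sets[OF sets_M refl]
  by blast

lemma integrable_ek: "integrable M (ek k)"
  by (rule integrable_const_bound[where B=1]) auto

lemma measurable_Fop [measurable]: "Fop c \<in> borel_measurable M"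
  unfolding Fop_def[abs_def] by measurable

lemma Fop_in_L2: "Fop c \<in> L2 M"
proof -
  have "cmod (Fop c x) \<le> (\<Sum>k\<in>{k. c k \<noteq> 0}. cmod (c k))" for x
    unfolding Fop_def using norm_sum[of "\<lambda>k. c k * ek k x"] by (simp add: norm_mult)
  then have "integrable M (\<lambda>x. (cmod (Fop c x))^2)"
    by (intro integrable_const_bound[where B="(\<Sum>k\<in>{k. c k \<noteq> 0}. cmod (c k))^2"])
      (auto intro!: AE_I2 power_mono)
  then show ?thesis by (simp add: L2_def)
qed

lemma graph_closure_add:
  assumes "(c, g) \<in> graph_closure M" "(d, h) \<in> graph_closure M"
  shows "((\<lambda>k. c k + d k), (\<lambda>x. g x + h x)) \<in> graph_closure M"
proof -
  obtain s where s: "\<And>n. s n \<in> finsupp_seqs" "(\<lambda>n. l2Z_dist (s n) c) \<longlonglongrightarrow> 0"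
      "(\<lambda>n. L2_dist M (Fop (s n)) g) \<longlonglongrightarrow> 0" and c: "c \<in> l2Z" and g: "g \<in> L2 M"
    using assms(1) by (rule graph_closureE) blast
  obtain t where t: "\<And>n. t n \<in> finsupp_seqs" "(\<lambda>n. l2Z_dist (t n) d) \<longlonglongrightarrow> 0"
      "(\<lambda>n. L2_dist M (Fop (t n)) h) \<longlonglongrightarrow> 0" and d: "d \<in> l2Z" and h: "h \<in> L2 M"
    using assms(2) by (rule graph_closureE) blast
  let ?u = "\<lambda>n k. s n k + t n k"
  have "l2Z_dist (?u n) (\<lambda>k. c k + d k) \<le> l2Z_dist (s n) c + l2Z_dist (t n) d" for n
    using L2_norm_diff_add_le[of "s n" _ "t n" c d] s(1) t(1) c d finsupp_seqs_subset_l2Z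
    by (auto simp: l2Z_dist_eq_L2_norm l2Z_eq_L2_space)
  then have "(\<lambda>n. l2Z_dist (?u n) (\<lambda>k. c k + d k)) \<longlonglongrightarrow> 0"
    by (intro Lim_null_comparison[OF _ tendsto_add_zero[OF s(2) t(2)]])
      (simp add: l2Z_dist_nonneg)
  moreover have "L2_dist M (Fop (?u n)) (\<lambda>x. g x + h x)
      \<le> L2_dist M (Fop (s n)) g + L2_dist M (Fop (t n)) h" for n
    using L2_norm_diff_add_le[of "Fop (s n)" M "Fop (t n)" g h] g h Fop_in_L2
    by (simp add: Fop_add s(1) t(1) L2_dist_eq_L2_norm L2_eq_L2_space)
  then have "(\<lambda>n. L2_dist M (Fop (?u n)) (\<lambda>x. g x + h x)) \<longlonglongrightarrow> 0"
    by (intro Lim_null_comparison[OF _ tendsto_add_zero[OF s(3) t(3)]])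
      (simp add: L2_dist_nonneg)
  moreover have "(\<lambda>k. c k + d k) \<in> l2Z" "(\<lambda>x. g x + h x) \<in> L2 M"
    using c d g h by (simp_all add: l2Z_eq_L2_space L2_eq_L2_space L2_space_add)
  ultimately show ?thesis
    using finsupp_seqs_add[OF s(1) t(1)] by (intro graph_closureI)
qed

lemma graph_closure_mult:
  assumes "(c, g) \<in> graph_closure M"
  shows "((\<lambda>k. a * c k), (\<lambda>x. a * g x)) \<in> graph_closure M"
proof -
  obtain s where s: "\<And>n. s n \<in> finsupp_seqs" "(\<lambda>n. l2Z_dist (s n) c) \<longlonglongrightarrow> 0"
      "(\<lambda>n. L2_dist M (Fop (s n)) g) \<longlonglongrightarrow> 0" and c: "c \<in> l2Z" and g: "g \<in> L2 M"
    using assms by (rule graph_closureE) blast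
  have "(\<lambda>n. l2Z_dist (\<lambda>k. a * s n k) (\<lambda>k. a * c k)) \<longlonglongrightarrow> 0"
    unfolding l2Z_dist_mult using tendsto_mult_right_zero[OF s(2)] .
  moreover have "(\<lambda>n. L2_dist M (Fop (\<lambda>k. a * s n k)) (\<lambda>x. a * g x)) \<longlonglongrightarrow> 0"
    unfolding Fop_mult L2_dist_mult using tendsto_mult_right_zero[OF s(3)] .
  moreover have "(\<lambda>k. a * c k) \<in> l2Z" "(\<lambda>x. a * g x) \<in> L2 M"
    using c g by (simp_all add: l2Z_eq_L2_space L2_eq_L2_space L2_space_mult)
  ultimately show ?thesis
    using finsupp_seqs_mult[OF s(1)] by (intro graph_closureI)
qed

lemma graph_closure_AE_cong:
  assumes "(c, g) \<in> graph_closure M" "h \<in> L2 M" "AE x in M. h x = g x"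
  shows "(c, h) \<in> graph_closure M"
proof -
  obtain s where s: "\<And>n. s n \<in> finsupp_seqs" "(\<lambda>n. l2Z_dist (s n) c) \<longlonglongrightarrow> 0"
      "(\<lambda>n. L2_dist M (Fop (s n)) g) \<longlonglongrightarrow> 0" and c: "c \<in> l2Z" and g: "g \<in> L2 M"
    using assms(1) by (rule graph_closureE) blast
  have [measurable]: "g \<in> borel_measurable M" "h \<in> borel_measurable M"
    using g assms(2) by (simp_all add: L2_def)
  have "L2_dist M (Fop (s n)) h = L2_dist M (Fop (s n)) g" for n
    unfolding L2_dist_def using assms(3) by (auto intro!: integral_cong_AE)
  with s c assms(2) show ?thesis
    by (intro graph_closureI) auto
qed

end

locale square_summable_fourier_coeffs = borel_finite_measure +
  assumes summable_fourier_coeffs: "(\<lambda>k::int. (cmod (CLINT x|M. ek k x))^2) summable_on UNIV"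
begin

definition fourier_energy :: real where
  "fourier_energy = (\<Sum>\<^sub>\<infinity>k::int. (cmod (CLINT x|M. ek k x))^2)"

lemma L2_set_shifted_fourier_coeffs_le:
  assumes "finite S"
  shows "L2_set (\<lambda>k. cmod (CLINT x|M. ek (k - j) x)) S \<le> sqrt fourier_energy"
proof -
  have "(\<Sum>k\<in>S. (cmod (CLINT x|M. ek (k - j) x))^2)
      = (\<Sum>l\<in>(\<lambda>k. k - j) ` S. (cmod (CLINT x|M. ek l x))^2)"
    by (subst sum.reindex) (auto simp: inj_on_def)
  also have "\<dots> \<le> fourier_energy"
    unfolding fourier_energy_def
    by (rule finite_sum_le_infsum[OF summable_fourier_coeffs]) (use assms in auto)
  finally show ?thesis
    unfolding L2_set_def by (rule real_sqrt_le_mono)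
qed

lemma L2_inner_Fop:
  assumes "c \<in> finsupp_seqs" "d \<in> finsupp_seqs"
  shows "L2_inner M (Fop c) (Fop d)
    = (\<Sum>j | d j \<noteq> 0. cnj (d j) * (\<Sum>k | c k \<noteq> 0. c k * (CLINT x|M. ek (k - j) x)))"
proof -
  have "Fop c x * cnj (Fop d x)
      = (\<Sum>j | d j \<noteq> 0. \<Sum>k | c k \<noteq> 0. cnj (d j) * c k * ek (k - j) x)" for x
    by (simp add: Fop_def cnj_sum sum_distrib_left sum_distrib_right ek_mult_cnj[symmetric]
        mult_ac flip: sum.swap[of _ "{k. c k \<noteq> 0}"])
  then show ?thesis
    unfolding L2_inner_def by (simp add: integrable_ek sum_distrib_left mult.assoc)
qed

lemma norm_L2_inner_Fop_le:
  assumes "c \<in> finsupp_seqs" "d \<in> finsupp_seqs"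
  shows "cmod (L2_inner M (Fop c) (Fop d))
    \<le> l2Z_dist c (\<lambda>k. 0) * (\<Sum>j | d j \<noteq> 0. cmod (d j)) * sqrt fourier_energy"
proof -
  have "cmod (\<Sum>k | c k \<noteq> 0. c k * (CLINT x|M. ek (k - j) x))
      \<le> l2Z_dist c (\<lambda>k. 0) * sqrt fourier_energy" for j
  proof -
    have "cmod (\<Sum>k | c k \<noteq> 0. c k * (CLINT x|M. ek (k - j) x))
        \<le> (\<Sum>k | c k \<noteq> 0. \<bar>cmod (c k)\<bar> * \<bar>cmod (CLINT x|M. ek (k - j) x)\<bar>)"
      using norm_sum[of "\<lambda>k. c k * (CLINT x|M. ek (k - j) x)" "{k. c k \<noteq> 0}"]
      by (simp add: norm_mult)
    also have "\<dots> \<le> L2_set (\<lambda>k. cmod (c k)) {k. c k \<noteq> 0}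
        * L2_set (\<lambda>k. cmod (CLINT x|M. ek (k - j) x)) {k. c k \<noteq> 0}"
      by (rule L2_set_mult_ineq)
    also have "\<dots> \<le> l2Z_dist c (\<lambda>k. 0) * sqrt fourier_energy"
      using assms(1) L2_set_shifted_fourier_coeffs_le
      by (simp add: l2Z_dist_zero_finsupp finsupp_seqs_def mult_left_mono)
    finally show ?thesis .
  qed
  then have "cmod (L2_inner M (Fop c) (Fop d))
      \<le> (\<Sum>j | d j \<noteq> 0. cmod (d j) * (l2Z_dist c (\<lambda>k. 0) * sqrt fourier_energy))"
    unfolding L2_inner_Fop[OF assms]
    by (intro order_trans[OF norm_sum] sum_mono) (simp add: norm_mult mult_left_mono)
  also have "\<dots> = l2Z_dist c (\<lambda>k. 0) * (\<Sum>j | d j \<noteq> 0. cmod (d j)) * sqrt fourier_energy"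
    by (simp add: sum_distrib_left sum_distrib_right mult_ac)
  finally show ?thesis .
qed

lemma graph_closure_zero_fibre:
  assumes "((\<lambda>k. 0), g) \<in> graph_closure M"
  shows "AE x in M. g x = 0"
proof -
  obtain s where s: "\<And>n. s n \<in> finsupp_seqs" "(\<lambda>n. l2Z_dist (s n) (\<lambda>k. 0)) \<longlonglongrightarrow> 0"
      "(\<lambda>n. L2_dist M (Fop (s n)) g) \<longlonglongrightarrow> 0" and g: "g \<in> L2 M"
    using assms by (rule graph_closureE) blast
  have "(\<lambda>n. L2_inner M (Fop (s n)) (Fop (s m))) \<longlonglongrightarrow> 0" for m
  proof (rule Lim_null_comparison)
    let ?C = "(\<Sum>j | s m j \<noteq> 0. cmod (s m j)) * sqrt fourier_energy"
    show "\<forall>\<^sub>F n in sequentially. cmod (L2_inner M (Fop (s n)) (Fop (s m)))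
        \<le> l2Z_dist (s n) (\<lambda>k. 0) * ?C"
      using norm_L2_inner_Fop_le[OF s(1) s(1)] by (simp add: mult.assoc)
    show "(\<lambda>n. l2Z_dist (s n) (\<lambda>k. 0) * ?C) \<longlonglongrightarrow> 0"
      using tendsto_mult_left_zero[OF s(2)] .
  qed
  with s g Fop_in_L2 show ?thesis
    by (intro L2_limit_AE_zero_if_asymptotically_orthogonal[where P="\<lambda>n. Fop (s n)"])
      (simp_all add: L2_eq_L2_space L2_dist_eq_L2_norm)
qed

lemma graph_closure_unique:
  assumes "(c, g) \<in> graph_closure M" "(c, h) \<in> graph_closure M"
  shows "AE x in M. g x = h x"
proof -
  have "((\<lambda>k. c k + -1 * c k), (\<lambda>x. g x + -1 * h x)) \<in> graph_closure M"
    by (intro graph_closure_add graph_closure_mult assms)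
  then have "AE x in M. g x + -1 * h x = 0"
    by (intro graph_closure_zero_fibre) simp
  then show ?thesis by eventually_elim simp
qed

lemma closable: "closable_F M"
proof -
  define Dom where "Dom = fst ` graph_closure M"
  define T where "T c = (SOME g. (c, g) \<in> graph_closure M)" for c
  have in_Dom: "(c, g) \<in> graph_closure M \<Longrightarrow> c \<in> Dom" for c g
    by (force simp: Dom_def)
  have graph_T: "c \<in> Dom \<Longrightarrow> (c, T c) \<in> graph_closure M" for c
    unfolding Dom_def T_def by (metis (mono_tags, lifting) image_iff prod.collapse someI)
  have T_AE_eq: "(c, g) \<in> graph_closure M \<Longrightarrow> AE x in M. T c x = g x" for c g
    by (rule graph_closure_unique[OF graph_T[OF in_Dom]])
  show ?thesis
    unfolding closable_F_def
  proof (intro exI[of _ Dom] exI[of _ T] conjI ballI allI)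
    fix c d assume "c \<in> Dom" "d \<in> Dom"
    then have "((\<lambda>k. c k + d k), (\<lambda>x. T c x + T d x)) \<in> graph_closure M"
      by (intro graph_closure_add graph_T)
    then show "(\<lambda>k. c k + d k) \<in> Dom" "AE x in M. T (\<lambda>k. c k + d k) x = T c x + T d x"
      by (rule in_Dom, rule T_AE_eq)
  next
    fix c a assume "c \<in> Dom"
    then have "((\<lambda>k. a * c k), (\<lambda>x. a * T c x)) \<in> graph_closure M"
      by (intro graph_closure_mult graph_T)
    then show "(\<lambda>k. a * c k) \<in> Dom" "AE x in M. T (\<lambda>k. a * c k) x = a * T c x"
      by (rule in_Dom, rule T_AE_eq)
  next
    fix c assume "c \<in> Dom"
    then show "T c \<in> L2 M"
      by (rule graph_closure_in_L2[OF graph_T])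
  next
    show "graph_closure M = {(c, g). c \<in> Dom \<and> g \<in> L2 M \<and> (AE x in M. g x = T c x)}"
    proof (intro set_eqI iffI; clarify)
      fix c g assume cg: "(c, g) \<in> graph_closure M"
      then show "c \<in> Dom \<and> g \<in> L2 M \<and> (AE x in M. g x = T c x)"
        using graph_closure_unique[OF cg graph_T[OF in_Dom[OF cg]]] in_Dom graph_closure_in_L2
        by blast
    next
      fix c g assume "c \<in> Dom" "g \<in> L2 M" "AE x in M. g x = T c x"
      then show "(c, g) \<in> graph_closure M"
        by (rule graph_closure_AE_cong[OF graph_T])
    qed
  qed
qed

end

theorem lemma3p5:
  fixes M :: "real measure"
  assumes "sets M = sets borel"
    and "finite_measure M"
    and "emeasure M (UNIV - {0..1}) = 0"
    and "(\<lambda>k::int. (cmod (CLINT x|M. ek k x))^2) summable_on UNIV"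
  shows "closable_F M"
proof -
  interpret square_summable_fourier_coeffs M
    using assms(1,2,4) by (simp add: square_summable_fourier_coeffs_def
        square_summable_fourier_coeffs_axioms_def borel_finite_measure_def
        borel_finite_measure_axioms_def)
  show ?thesis by (rule closable)
qed

end
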